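(* Let $\tau>0$ and $\rho\in\mathcal P_2(\mathbb R^d)$. If $\rho_\tau\in\operatorname{argmin}_{\nu\in\mathcal P_2}\{\frac1{2\tau}W_2^2(\rho,\nu)+E_\infty(\nu)\}$, then also $\rho_\tau\in\operatorname{argmin}_{\nu\in\mathcal P_2}\{\frac1{2\tau}W_2^2(\rho,\nu)+\tilde E_\infty(\nu;\rho_\tau)\}$.
   Context: $\mathcal N(x)=\frac1{2\pi}\log|x|$ if $d=2$, $\mathcal N(x)=\frac{-1}{d(d-2)\alpha_d}|x|^{2-d}$ if $d\ne2$; $\mathbf N\mu=\mathcal N*\mu$. $\mathcal P_2$: probability measures with finite second moment; $W_2$: 2-Wasserstein distance; $\|\nu\|_\infty\le1$ means $\nu$ has a density bounded by $1$. $E_\infty(\nu)=\frac12\int\mathbf N\nu\,d\nu$ if $\|\nu\|_\infty\le1$, else $+\infty$; for $\mu$ with $\|\mu\|_\infty\le1$, $\tilde E_\infty(\nu;\mu)=\int\mathbf N\mu\,d\nu$ if $\|\nu\|_\infty\le1$, else $+\infty$. *)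

theory Defs
  imports "HOL-Probability.Probability"
begin

definition unit_ball_vol :: "'a::euclidean_space itself \<Rightarrow> real" where
  "unit_ball_vol _ = measure lborel (ball (0::'a) 1)"

text \<open>Newtonian kernel (fundamental solution of the Laplacian), d = DIM('a).\<close>
definition newton_kernel :: "'a::euclidean_space \<Rightarrow> real" where
  "newton_kernel x =
     (let d = real DIM('a) in
      if DIM('a) = 2 then (1 / (2 * pi)) * ln (norm x)
      else - 1 / (d * (d - 2) * unit_ball_vol TYPE('a)) * norm x powr (2 - d))"

definition newton_pot :: "'a::euclidean_space measure \<Rightarrow> 'a \<Rightarrow> real" where
  "newton_pot \<mu> x = (\<integral>y. newton_kernel (x - y) \<partial>\<mu>)"

definition P2 :: "'a::euclidean_space measure set" where
  "P2 = {\<mu>. prob_space \<mu> \<and> sets \<mu> = sets borel \<and> (\<integral>\<^sup>+ x. ennreal ((norm x)\<^sup>2) \<partial>\<mu>) < \<infinity>}"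

definition couplings :: "'a::euclidean_space measure \<Rightarrow> 'a measure \<Rightarrow> ('a \<times> 'a) measure set" where
  "couplings \<mu> \<nu> = {\<gamma>. sets \<gamma> = sets (borel \<Otimes>\<^sub>M borel) \<and>
       distr \<gamma> borel fst = \<mu> \<and> distr \<gamma> borel snd = \<nu>}"

definition W2 :: "'a::euclidean_space measure \<Rightarrow> 'a measure \<Rightarrow> real" where
  "W2 \<mu> \<nu> = sqrt (enn2real (INF \<gamma>\<in>couplings \<mu> \<nu>. \<integral>\<^sup>+ p. ennreal ((dist (fst p) (snd p))\<^sup>2) \<partial>\<gamma>))"

text \<open>\<open>\<parallel>\<nu>\<parallel>\<^sub>\<infinity> \<le> 1\<close>: nu has a Lebesgue density bounded by 1.\<close>
definition dens_le_one :: "'a::euclidean_space measure \<Rightarrow> bool" where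
  "dens_le_one \<nu> \<longleftrightarrow> (\<exists>f \<in> borel_measurable borel. (\<forall>x. f x \<le> 1) \<and> \<nu> = density lborel f)"

definition E_inf :: "'a::euclidean_space measure \<Rightarrow> ereal" where
  "E_inf \<nu> = (if dens_le_one \<nu> then ereal ((1/2) * (\<integral>x. newton_pot \<nu> x \<partial>\<nu>)) else \<infinity>)"

definition E_inf_tilde :: "'a::euclidean_space measure \<Rightarrow> 'a measure \<Rightarrow> ereal" where
  "E_inf_tilde \<nu> \<mu> = (if dens_le_one \<nu> then ereal (\<integral>x. newton_pot \<mu> x \<partial>\<nu>) else \<infinity>)"

definition argmin_P2 :: "('a::euclidean_space measure \<Rightarrow> ereal) \<Rightarrow> 'a measure set" where
  "argmin_P2 F = {m \<in> P2. \<forall>\<nu>\<in>P2. F m \<le> F \<nu>}"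

end

theory Submission
  imports Defs
begin

text \<open>If \<open>\<rho>\<^sub>\<tau>\<close> minimizes \<open>W\<^sub>2\<^sup>2(\<rho>,\<nu>)/(2\<tau>) + E\<^sub>\<infinity>(\<nu>)\<close> and \<open>\<nu>\<close> has finite energy, then both measures
  have densities bounded by 1, and so does every convex combination \<open>(1-t)\<rho>\<^sub>\<tau> + t\<nu>\<close>.  Along this
  segment \<open>W\<^sub>2\<^sup>2(\<rho>,\<cdot>)\<close> is convex (mix two almost optimal couplings), while \<open>E\<^sub>\<infinity>\<close> is a quadratic
  polynomial in \<open>t\<close> whose linear coefficient is \<open>\<integral>\<^bold>N\<rho>\<^sub>\<tau> d(\<nu> - \<rho>\<^sub>\<tau>)\<close>, by symmetry of the kernel.
  Minimality at \<open>t = 0\<close> makes the first-order term nonnegative, which is the claimed inequality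
  for the linearized energy \<open>\<integral>\<^bold>N\<rho>\<^sub>\<tau> d\<nu>\<close>.  All interaction integrals converge absolutely:
  \<open>|N(z)|\<close> is at most a constant times \<open>|z|^(1-d)\<close> on the unit ball plus \<open>1 + |z|\<close>, and the
  densities are bounded, integrable and have a finite first moment.\<close>

section \<open>Bounds on the Newtonian kernel\<close>

definition truncated_inverse_power :: "'a::euclidean_space \<Rightarrow> real" where
  "truncated_inverse_power z =
     (if z \<noteq> 0 \<and> norm z < 1 then 1 / norm z ^ (DIM('a) - 1) else 0)"

lemma truncated_inverse_power_nonneg: "0 \<le> truncated_inverse_power z"
  unfolding truncated_inverse_power_def by auto

lemma borel_measurable_truncated_inverse_power [measurable]:
  "truncated_inverse_power \<in> borel_measurable (borel :: 'a::euclidean_space measure)"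
  unfolding truncated_inverse_power_def by measurable

lemma borel_measurable_newton_kernel [measurable]:
  "newton_kernel \<in> borel_measurable (borel :: 'a::euclidean_space measure)"
  unfolding newton_kernel_def Let_def by measurable

lemma newton_kernel_diff_commute: "newton_kernel (x - y) = newton_kernel (y - x)"
  unfolding newton_kernel_def by (simp only: norm_minus_commute)

lemma powr_le_inverse_power_plus:
  fixes r :: real and d :: nat
  assumes "d \<noteq> 2" "1 \<le> d" "0 \<le> r"
  shows "r powr (2 - real d) \<le> (if r \<noteq> 0 \<and> r < 1 then 1 / r ^ (d - 1) else 0) + 1 + r"
proof (cases "r = 0 \<or> 1 \<le> r \<or> d = 1")
  case True
  then show ?thesis
  proof (elim disjE)
    assume "1 \<le> r"
    then have "r powr (2 - real d) \<le> r powr 1"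
      using assms by (intro powr_mono) auto
    then show ?thesis using \<open>1 \<le> r\<close> by auto
  qed (use assms in auto)
next
  case False
  then have r: "0 < r" "r < 1" and "3 \<le> d" using assms by auto
  have "r powr (2 - real d) \<le> r powr (- real (d - 1))"
    using r \<open>3 \<le> d\<close> by (intro powr_mono') auto
  also have "\<dots> = 1 / r ^ (d - 1)"
    using r by (simp add: powr_minus powr_realpow divide_inverse)
  finally show ?thesis using r by auto
qed

lemma abs_ln_le_inverse_plus:
  fixes r :: real
  assumes "0 \<le> r"
  shows "\<bar>ln r\<bar> \<le> (if r \<noteq> 0 \<and> r < 1 then 1 / r else 0) + 1 + r"
proof (cases "r = 0 \<or> 1 \<le> r")
  case True
  then show ?thesis using ln_le_minus_one[of r] by auto
next
  case False
  then have r: "0 < r" "r < 1" using assms by auto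
  have "- ln r = ln (1 / r)" using r by (simp add: ln_div)
  also have "\<dots> \<le> 1 / r - 1" using r by (intro ln_le_minus_one) auto
  finally show ?thesis using r by simp
qed

lemma newton_kernel_bound:
  obtains C where "0 \<le> C"
    "\<And>z::'a::euclidean_space. \<bar>newton_kernel z\<bar> \<le> C * (truncated_inverse_power z + 1 + norm z)"
proof (cases "DIM('a) = 2")
  case True
  have "\<bar>newton_kernel z\<bar> \<le> 1 * (truncated_inverse_power z + 1 + norm z)" for z :: 'a
  proof -
    have "\<bar>newton_kernel z\<bar> = \<bar>ln (norm z)\<bar> / (2 * pi)"
      using True unfolding newton_kernel_def Let_def by (simp add: abs_mult)
    also have "\<dots> \<le> \<bar>ln (norm z)\<bar>"
      using pi_gt3 by (simp add: divide_le_eq mult_le_cancel_left1)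
    also have "\<dots> \<le> truncated_inverse_power z + 1 + norm z"
    proof -
      have "truncated_inverse_power z = (if norm z \<noteq> 0 \<and> norm z < 1 then 1 / norm z else 0)"
        using True unfolding truncated_inverse_power_def by simp
      then show ?thesis using abs_ln_le_inverse_plus[of "norm z"] by simp
    qed
    finally show ?thesis by simp
  qed
  then show ?thesis using that[of 1] by auto
next
  case False
  define k where "k = \<bar>1 / (real DIM('a) * (real DIM('a) - 2) * unit_ball_vol TYPE('a))\<bar>"
  have "\<bar>newton_kernel z\<bar> \<le> k * (truncated_inverse_power z + 1 + norm z)" for z :: 'a
  proof -
    have "\<bar>newton_kernel z\<bar> = k * norm z powr (2 - real DIM('a))"
      using False unfolding newton_kernel_def Let_def k_def by (simp add: abs_mult)
    also have "\<dots> \<le> k * (truncated_inverse_power z + 1 + norm z)"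
      using powr_le_inverse_power_plus[of "DIM('a)" "norm z"] False DIM_positive[where 'a='a]
      unfolding truncated_inverse_power_def k_def
      by (intro mult_left_mono) (auto simp del: DIM_positive)
    finally show ?thesis .
  qed
  then show ?thesis using that[of k] by (auto simp: k_def)
qed

lemma dyadic_interval:
  fixes r :: real
  assumes "0 < r" "r < 1"
  obtains m :: nat where "(1/2) ^ (m + 1) < r" "r \<le> (1/2) ^ m"
proof -
  have ex: "\<exists>n. (1/2::real) ^ n < r" using assms by (intro real_arch_pow_inv) auto
  define k where "k = (LEAST n. (1/2::real) ^ n < r)"
  have k: "(1/2::real) ^ k < r" unfolding k_def using ex by (rule LeastI_ex)
  then have "k \<noteq> 0" using assms by (auto intro!: Nat.gr0I)
  have "\<not> (1/2::real) ^ (k - 1) < r" unfolding k_def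
    by (rule not_less_Least) (use \<open>k \<noteq> 0\<close> k_def in auto)
  then show ?thesis using k \<open>k \<noteq> 0\<close> that[of "k - 1"] by auto
qed

lemma emeasure_lborel_ball_0:
  fixes r :: real
  assumes "0 \<le> r"
  shows "emeasure lborel (ball (0::'a::euclidean_space) r) = ennreal (r ^ DIM('a)) * emeasure lborel (ball (0::'a) 1)"
proof -
  have "emeasure lebesgue A = emeasure lborel A" if "A \<in> sets borel" for A :: "'a set"
    using that by (subst emeasure_completion) (auto simp: main_part_sets)
  then show ?thesis
    using emeasure_lebesgue_ball_conv_unit_ball[OF assms, of "0::'a"] by simp
qed

lemma truncated_inverse_power_le_dyadic_sum:
  "ennreal (truncated_inverse_power (z::'a::euclidean_space))
    \<le> (\<Sum>m. ennreal ((2 ^ (m + 1)) ^ (DIM('a) - 1)) * indicator (ball 0 (2 * (1/2) ^ m)) z)"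
  (is "_ \<le> (\<Sum>m. ?f m)")
proof (cases "z \<noteq> 0 \<and> norm z < 1")
  case True
  then obtain m where m: "(1/2) ^ (m + 1) < norm z" "norm z \<le> (1/2) ^ m"
    using dyadic_interval[of "norm z"] by auto
  have "1 / norm z < 1 / (1/2) ^ (m + 1)"
    using m True by (intro divide_strict_left_mono) auto
  then have "(1 / norm z) ^ (DIM('a) - 1) \<le> (2 ^ (m + 1)) ^ (DIM('a) - 1)"
    by (intro power_mono) (auto simp: power_one_over)
  then have "ennreal (truncated_inverse_power z) \<le> ?f m"
    using True m unfolding truncated_inverse_power_def by (simp add: power_one_over ennreal_leI)
  also have "\<dots> \<le> (\<Sum>m. ?f m)"
  proof -
    have "(\<Sum>i\<in>{m}. ?f i) \<le> (\<Sum>i. ?f i)"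
      by (rule sum_le_suminf[OF summableI]) auto
    then show ?thesis by (simp only: sum.insert_remove sum.empty finite.emptyI) simp
  qed
  finally show ?thesis .
qed (auto simp: truncated_inverse_power_def)

text \<open>On the shell \<open>2^-(m+1) < |z| \<le> 2^-m\<close> the integrand is at most \<open>2^((m+1)(d-1))\<close>, and the
  shell lies in a ball of volume proportional to \<open>2^(-md)\<close>; the resulting series is geometric.\<close>
lemma nn_integral_truncated_inverse_power_finite:
  "(\<integral>\<^sup>+z. truncated_inverse_power (z::'a::euclidean_space) \<partial>lborel) < \<infinity>"
proof -
  define d where "d = DIM('a)"
  define c :: "nat \<Rightarrow> real" where "c m = (2 ^ (m + 1)) ^ (d - 1)" for m
  define B :: "nat \<Rightarrow> 'a set" where "B m = ball 0 (2 * (1/2) ^ m)" for m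
  define V where "V = emeasure lborel (ball (0::'a) 1)"
  have [measurable]: "B m \<in> sets borel" for m
    unfolding B_def by simp
  have volume: "ennreal (c m) * emeasure lborel (B m) = ennreal (2 ^ (2 * d - 1) * (1/2) ^ m) * V" for m
  proof -
    obtain e where e: "d = e + 1" using DIM_positive[where 'a='a] unfolding d_def
      by (metis Suc_eq_plus1 Suc_pred)
    have "c m * (2 * (1/2) ^ m) ^ d = 2 ^ (2 * d - 1) * (1/2) ^ m"
      unfolding c_def e
      by (simp add: power_mult_distrib power_divide power_add power_mult field_simps power2_eq_square)
    moreover have "emeasure lborel (B m) = ennreal ((2 * (1/2) ^ m) ^ d) * V"
      unfolding B_def V_def d_def by (rule emeasure_lborel_ball_0) simp
    ultimately show ?thesis
      by (simp add: mult.assoc[symmetric] ennreal_mult[symmetric] c_def)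
  qed
  have "(\<integral>\<^sup>+z. truncated_inverse_power (z::'a) \<partial>lborel) \<le> (\<integral>\<^sup>+z. (\<Sum>m. ennreal (c m) * indicator (B m) z) \<partial>lborel)"
    unfolding c_def B_def d_def by (rule nn_integral_mono) (rule truncated_inverse_power_le_dyadic_sum)
  also have "\<dots> = (\<Sum>m. ennreal (c m) * emeasure lborel (B m))"
    by (subst nn_integral_suminf) (auto simp: nn_integral_cmult_indicator)
  also have "\<dots> = ennreal (\<Sum>m. 2 ^ (2 * d - 1) * (1/2) ^ m) * V"
    by (simp add: volume ennreal_suminf_multc suminf_ennreal2 summable_geometric)
  also have "\<dots> < \<infinity>"
    using emeasure_lborel_ball_finite[of "0::'a" 1] unfolding V_def by (simp add: ennreal_mult_less_top)
  finally show ?thesis .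
qed

lemma nn_integral_lborel_reflect:
  fixes h :: "'a::euclidean_space \<Rightarrow> ennreal"
  assumes [measurable]: "h \<in> borel_measurable borel"
  shows "(\<integral>\<^sup>+y. h (x - y) \<partial>lborel) = (\<integral>\<^sup>+z. h z \<partial>lborel)"
proof -
  have "(\<integral>\<^sup>+z. h z \<partial>lborel) =
      (\<integral>\<^sup>+z. h z \<partial>density (distr lborel borel (\<lambda>y. x + (-1) *\<^sub>R y)) (\<lambda>_. ennreal (\<bar>-1::real\<bar> ^ DIM('a))))"
    by (subst lborel_affine[of "-1" x, symmetric]) auto
  also have "\<dots> = (\<integral>\<^sup>+y. h (x - y) \<partial>lborel)"
    by (simp add: nn_integral_density nn_integral_distr)
  finally show ?thesis ..
qed

section \<open>Interaction energy of bounded densities\<close>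

definition bounded_prob_density :: "('a::euclidean_space \<Rightarrow> real) \<Rightarrow> bool" where
  "bounded_prob_density p \<longleftrightarrow> p \<in> borel_measurable borel \<and> (\<forall>x. 0 \<le> p x \<and> p x \<le> 1) \<and>
     (\<integral>\<^sup>+x. p x \<partial>lborel) = 1 \<and> (\<integral>\<^sup>+x. p x * (norm x)\<^sup>2 \<partial>lborel) < \<infinity>"

lemma bounded_prob_densityD:
  assumes "bounded_prob_density p"
  shows bounded_prob_density_measurable: "p \<in> borel_measurable borel"
    and bounded_prob_density_nonneg: "0 \<le> p x"
    and "p x \<le> 1"
    and nn_integral_bounded_prob_density: "(\<integral>\<^sup>+x. p x \<partial>lborel) = 1"
    and "(\<integral>\<^sup>+x. p x * (norm x)\<^sup>2 \<partial>lborel) < \<infinity>"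
  using assms unfolding bounded_prob_density_def by auto

lemma bounded_prob_density_first_moment:
  assumes "bounded_prob_density p"
  shows "(\<integral>\<^sup>+x. p x * norm x \<partial>lborel) < \<infinity>"
proof -
  note p = bounded_prob_densityD[OF assms]
  have [measurable]: "p \<in> borel_measurable borel" by (rule p(1))
  have "(\<integral>\<^sup>+x. p x * norm x \<partial>lborel) \<le> (\<integral>\<^sup>+x. ennreal (p x) + ennreal (p x * (norm x)\<^sup>2) \<partial>lborel)"
  proof (rule nn_integral_mono)
    fix x :: 'a
    have "norm x \<le> 1 + (norm x)\<^sup>2"
    proof -
      have "2 * norm x \<le> (norm x)\<^sup>2 + 1"
        using zero_le_power2[of "norm x - 1"] by (simp add: power2_diff)
      then show ?thesis using norm_ge_zero[of x] by linarith
    qed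
    then have "p x * norm x \<le> p x + p x * (norm x)\<^sup>2"
      using p(2)[of x] by (metis distrib_left mult.right_neutral mult_left_mono)
    then show "ennreal (p x * norm x) \<le> ennreal (p x) + ennreal (p x * (norm x)\<^sup>2)"
      using p(2)[of x] by (simp add: ennreal_plus[symmetric] del: ennreal_plus)
  qed
  also have "\<dots> = 1 + (\<integral>\<^sup>+x. p x * (norm x)\<^sup>2 \<partial>lborel)"
    by (subst nn_integral_add) (auto simp: p(4))
  also have "\<dots> < \<infinity>" using p(5) by simp
  finally show ?thesis .
qed

lemma nn_integral_newton_majorant_bound:
  assumes "bounded_prob_density q"
  obtains K where "0 \<le> K" "\<And>x. (\<integral>\<^sup>+y. q y * (truncated_inverse_power (x - y) + 1 + norm (x - y)) \<partial>lborel)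
      \<le> ennreal (K * (1 + norm x))"
proof -
  note q = bounded_prob_densityD[OF assms]
  have [measurable]: "q \<in> borel_measurable borel" by (rule q(1))
  obtain ks where ks: "0 \<le> ks" "(\<integral>\<^sup>+z. truncated_inverse_power (z::'a) \<partial>lborel) = ennreal ks"
    using nn_integral_truncated_inverse_power_finite[where 'a='a] by (auto simp: less_top_ennreal)
  obtain m1 where m1: "0 \<le> m1" "(\<integral>\<^sup>+z. q z * norm z \<partial>lborel) = ennreal m1"
    using bounded_prob_density_first_moment[OF assms] by (auto simp: less_top_ennreal)
  show ?thesis
  proof (rule that[of "ks + 1 + m1"])
    fix x :: 'a
    have "(\<integral>\<^sup>+y. q y * (truncated_inverse_power (x - y) + 1 + norm (x - y)) \<partial>lborel)
        \<le> (\<integral>\<^sup>+y. ennreal (truncated_inverse_power (x - y))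
              + (ennreal (1 + norm x) * ennreal (q y) + ennreal (q y * norm y)) \<partial>lborel)"
    proof (rule nn_integral_mono)
      fix y :: 'a
      have s: "0 \<le> truncated_inverse_power (x - y)" by (rule truncated_inverse_power_nonneg)
      have "q y * truncated_inverse_power (x - y) \<le> truncated_inverse_power (x - y)"
        using q(2,3)[of y] s by (simp add: mult_left_le_one_le)
      moreover have "q y * norm (x - y) \<le> q y * norm x + q y * norm y"
        using q(2)[of y] norm_triangle_ineq4[of x y] by (metis distrib_left mult_left_mono)
      ultimately have "q y * (truncated_inverse_power (x - y) + 1 + norm (x - y))
          \<le> truncated_inverse_power (x - y) + ((1 + norm x) * q y + q y * norm y)"
        by (simp add: algebra_simps)
      then show "ennreal (q y * (truncated_inverse_power (x - y) + 1 + norm (x - y)))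
          \<le> ennreal (truncated_inverse_power (x - y)) + (ennreal (1 + norm x) * ennreal (q y) + ennreal (q y * norm y))"
        using q(2)[of y] s by (simp add: ennreal_plus[symmetric] ennreal_mult[symmetric] del: ennreal_plus)
    qed
    also have "\<dots> = ennreal ks + (ennreal (1 + norm x) + ennreal m1)"
      by (simp add: nn_integral_add nn_integral_cmult q(4) ks m1
          nn_integral_lborel_reflect[where h="\<lambda>z. ennreal (truncated_inverse_power z)"])
    also have "\<dots> \<le> ennreal ((ks + 1 + m1) * (1 + norm x))"
    proof -
      have "ks + ((1 + norm x) + m1) \<le> (ks + 1 + m1) * (1 + norm x)"
        using ks(1) m1(1) by (simp add: algebra_simps mult_nonneg_nonneg)
      then show ?thesis
        using ks(1) m1(1) by (simp add: ennreal_plus[symmetric] del: ennreal_plus)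
    qed
    finally show "(\<integral>\<^sup>+y. q y * (truncated_inverse_power (x - y) + 1 + norm (x - y)) \<partial>lborel)
        \<le> ennreal ((ks + 1 + m1) * (1 + norm x))" .
  qed (use ks m1 in simp)
qed

lemma borel_measurable_newton_kernel_diff [measurable]:
  "(\<lambda>z::'a::euclidean_space \<times> 'a. newton_kernel (fst z - snd z)) \<in> borel_measurable (borel \<Otimes>\<^sub>M borel)"
  by (rule measurable_compose[where g=newton_kernel and N=borel]) auto

lemma nn_integral_newton_interaction_section_bound:
  assumes p: "bounded_prob_density p" and q: "bounded_prob_density q"
  obtains M where "0 \<le> M" "\<And>x. (\<integral>\<^sup>+y. norm (p x * q y * newton_kernel (x - y)) \<partial>lborel)
      \<le> ennreal M * (ennreal (p x) + ennreal (p x * norm x))"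
proof -
  have [measurable]: "q \<in> borel_measurable borel"
    using q by (rule bounded_prob_density_measurable)
  note p0 = bounded_prob_density_nonneg[OF p] and q0 = bounded_prob_density_nonneg[OF q]
  obtain C where C: "0 \<le> C"
    "\<And>z::'a. \<bar>newton_kernel z\<bar> \<le> C * (truncated_inverse_power z + 1 + norm z)"
    using newton_kernel_bound[where 'a='a] by blast
  obtain K where K: "0 \<le> K" "\<And>x. (\<integral>\<^sup>+y. q y * (truncated_inverse_power (x - y) + 1 + norm (x - y)) \<partial>lborel)
      \<le> ennreal (K * (1 + norm x))"
    using nn_integral_newton_majorant_bound[OF q] by blast
  have "(\<integral>\<^sup>+y. norm (p x * q y * newton_kernel (x - y)) \<partial>lborel)
      \<le> ennreal (C * K) * (ennreal (p x) + ennreal (p x * norm x))" for x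
  proof -
    have "(\<integral>\<^sup>+y. norm (p x * q y * newton_kernel (x - y)) \<partial>lborel)
        \<le> (\<integral>\<^sup>+y. ennreal (C * p x) * (q y * (truncated_inverse_power (x - y) + 1 + norm (x - y))) \<partial>lborel)"
    proof (rule nn_integral_mono)
      fix y
      have "norm (p x * q y * newton_kernel (x - y)) = p x * q y * \<bar>newton_kernel (x - y)\<bar>"
        using p0 q0 by (simp add: abs_mult)
      also have "\<dots> \<le> (C * p x) * (q y * (truncated_inverse_power (x - y) + 1 + norm (x - y)))"
        using mult_left_mono[OF C(2)[of "x - y"], of "p x * q y"] p0 q0 by (simp add: ac_simps)
      finally show "ennreal (norm (p x * q y * newton_kernel (x - y)))
          \<le> ennreal (C * p x) * (q y * (truncated_inverse_power (x - y) + 1 + norm (x - y)))"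
        using C(1) p0 q0 truncated_inverse_power_nonneg[of "x - y"]
        by (simp add: ennreal_mult[symmetric] ennreal_leI)
    qed
    also have "\<dots> = ennreal (C * p x) * (\<integral>\<^sup>+y. q y * (truncated_inverse_power (x - y) + 1 + norm (x - y)) \<partial>lborel)"
      by (rule nn_integral_cmult) measurable
    also have "\<dots> \<le> ennreal (C * p x) * ennreal (K * (1 + norm x))"
      by (intro mult_left_mono K(2)) auto
    also have "\<dots> = ennreal (C * K) * (ennreal (p x) + ennreal (p x * norm x))"
      using C(1) K(1) p0[of x]
      by (simp add: ennreal_mult[symmetric] ennreal_plus[symmetric] algebra_simps del: ennreal_plus)
    finally show ?thesis .
  qed
  then show ?thesis using that[of "C * K"] C(1) K(1) by auto
qed

lemma integrable_newton_interaction: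
  assumes p: "bounded_prob_density p" and q: "bounded_prob_density q"
  shows "integrable (lborel \<Otimes>\<^sub>M lborel) (\<lambda>z. p (fst z) * q (snd z) * newton_kernel (fst z - snd z))"
proof (rule integrableI_bounded)
  have [measurable]: "p \<in> borel_measurable borel" "q \<in> borel_measurable borel"
    using p q by (simp_all add: bounded_prob_density_def)
  show "(\<lambda>z. p (fst z) * q (snd z) * newton_kernel (fst z - snd z)) \<in> borel_measurable (lborel \<Otimes>\<^sub>M lborel)"
    by measurable
  obtain M where M: "0 \<le> M" "\<And>x. (\<integral>\<^sup>+y. norm (p x * q y * newton_kernel (x - y)) \<partial>lborel)
      \<le> ennreal M * (ennreal (p x) + ennreal (p x * norm x))"
    using nn_integral_newton_interaction_section_bound[OF p q] by blast
  have "(\<integral>\<^sup>+z. norm (p (fst z) * q (snd z) * newton_kernel (fst z - snd z)) \<partial>(lborel \<Otimes>\<^sub>M lborel))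
      = (\<integral>\<^sup>+x. \<integral>\<^sup>+y. norm (p x * q y * newton_kernel (x - y)) \<partial>lborel \<partial>lborel)"
    by (subst lborel.nn_integral_fst[symmetric]) auto
  also have "\<dots> \<le> (\<integral>\<^sup>+x. ennreal M * (ennreal (p x) + ennreal (p x * norm x)) \<partial>lborel)"
    by (rule nn_integral_mono) (rule M(2))
  also have "\<dots> = ennreal M * (1 + (\<integral>\<^sup>+x. p x * norm x \<partial>lborel))"
    by (simp add: nn_integral_cmult nn_integral_add nn_integral_bounded_prob_density[OF p])
  also have "\<dots> < \<infinity>"
    using bounded_prob_density_first_moment[OF p] by (simp add: ennreal_mult_less_top)
  finally show "(\<integral>\<^sup>+z. norm (p (fst z) * q (snd z) * newton_kernel (fst z - snd z)) \<partial>(lborel \<Otimes>\<^sub>M lborel)) < \<infinity>" .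
qed

definition newton_interaction :: "('a::euclidean_space \<Rightarrow> real) \<Rightarrow> ('a \<Rightarrow> real) \<Rightarrow> real" where
  "newton_interaction p q =
     (\<integral>z. p (fst z) * q (snd z) * newton_kernel (fst z - snd z) \<partial>(lborel \<Otimes>\<^sub>M lborel))"

lemma newton_interaction_commute:
  assumes "bounded_prob_density p" "bounded_prob_density q"
  shows "newton_interaction p q = newton_interaction q p"
proof -
  have "newton_interaction q p = (\<integral>(x, y). p y * q x * newton_kernel (y - x) \<partial>(lborel \<Otimes>\<^sub>M lborel))"
    unfolding newton_interaction_def
    by (intro Bochner_Integration.integral_cong) (auto simp: ac_simps newton_kernel_diff_commute)
  also have "\<dots> = newton_interaction p q"
    unfolding newton_interaction_def
    using lborel_pair.integral_product_swap[of "\<lambda>z. p (fst z) * q (snd z) * newton_kernel (fst z - snd z)"]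
      integrable_newton_interaction[OF assms]
    by (simp add: case_prod_beta)
  finally show ?thesis ..
qed

lemma newton_interaction_convex_combination:
  assumes F: "bounded_prob_density F" and G: "bounded_prob_density G"
  shows "newton_interaction (\<lambda>x. (1 - t) * F x + t * G x) (\<lambda>x. (1 - t) * F x + t * G x)
    = (1 - t)\<^sup>2 * newton_interaction F F + 2 * t * (1 - t) * newton_interaction G F
      + t\<^sup>2 * newton_interaction G G"
proof -
  define H where "H p q z = p (fst z) * q (snd z) * newton_kernel (fst z - snd z)" for p q :: "'a \<Rightarrow> real" and z
  have int: "integrable (lborel \<Otimes>\<^sub>M lborel) (H p q)" if "p \<in> {F, G}" "q \<in> {F, G}" for p q
    using that integrable_newton_interaction[OF F F] integrable_newton_interaction[OF F G]
      integrable_newton_interaction[OF G F] integrable_newton_interaction[OF G G]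
    unfolding H_def by auto
  have "newton_interaction (\<lambda>x. (1 - t) * F x + t * G x) (\<lambda>x. (1 - t) * F x + t * G x)
      = (\<integral>z. (1 - t)\<^sup>2 * H F F z + ((1 - t) * t * H F G z + (t * (1 - t) * H G F z + t\<^sup>2 * H G G z))
          \<partial>(lborel \<Otimes>\<^sub>M lborel))"
    unfolding newton_interaction_def H_def
    by (intro Bochner_Integration.integral_cong) (auto simp: algebra_simps power2_eq_square)
  also have "\<dots> = (1 - t)\<^sup>2 * newton_interaction F F + ((1 - t) * t * newton_interaction F G
      + (t * (1 - t) * newton_interaction G F + t\<^sup>2 * newton_interaction G G))"
    using int by (simp add: newton_interaction_def H_def[abs_def])
  also have "\<dots> = (1 - t)\<^sup>2 * newton_interaction F F + 2 * t * (1 - t) * newton_interaction G F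
      + t\<^sup>2 * newton_interaction G G"
    using newton_interaction_commute[OF F G] by (simp add: algebra_simps)
  finally show ?thesis .
qed

lemma integral_newton_pot_density:
  assumes p: "bounded_prob_density p" and q: "bounded_prob_density q"
  shows "(\<integral>x. newton_pot (density lborel q) x \<partial>density lborel p) = newton_interaction p q"
proof -
  have [measurable]: "p \<in> borel_measurable borel" "q \<in> borel_measurable borel"
    using p q by (simp_all add: bounded_prob_density_def)
  note p0 = bounded_prob_density_nonneg[OF p] and q0 = bounded_prob_density_nonneg[OF q]
  have pot: "newton_pot (density lborel q) x = (\<integral>y. q y * newton_kernel (x - y) \<partial>lborel)" for x
    unfolding newton_pot_def by (subst integral_density) (auto simp: q0)
  have "(\<lambda>(x, y). q y * newton_kernel (x - y)) \<in> borel_measurable (borel \<Otimes>\<^sub>M lborel)"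
    by (simp add: case_prod_beta' measurable_cong_sets[OF sets_pair_measure_cong[OF refl sets_lborel] refl])
  then have [measurable]: "(\<lambda>x. \<integral>y. q y * newton_kernel (x - y) \<partial>lborel) \<in> borel_measurable borel"
    by (rule lborel.borel_measurable_lebesgue_integral)
  have "(\<integral>x. newton_pot (density lborel q) x \<partial>density lborel p)
      = (\<integral>x. p x * (\<integral>y. q y * newton_kernel (x - y) \<partial>lborel) \<partial>lborel)"
    unfolding pot by (subst integral_density) (auto simp: p0)
  also have "\<dots> = (\<integral>x. \<integral>y. p x * q y * newton_kernel (x - y) \<partial>lborel \<partial>lborel)"
    by (simp add: mult.assoc)
  also have "\<dots> = newton_interaction p q"
    unfolding newton_interaction_def using integrable_newton_interaction[OF p q]
    by (subst lborel_pair.integral_fst'[symmetric]) (auto simp: case_prod_beta)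
  finally show ?thesis .
qed

lemma P2_D:
  assumes "\<mu> \<in> P2"
  shows "prob_space \<mu>" "sets \<mu> = sets borel" "space \<mu> = UNIV"
    "(\<integral>\<^sup>+ x. ennreal ((norm x)\<^sup>2) \<partial>\<mu>) < \<infinity>"
  using assms sets_eq_imp_space_eq[of \<mu> borel] unfolding P2_def by auto

lemma bounded_prob_density_convex_combination:
  assumes F: "bounded_prob_density F" and G: "bounded_prob_density G" and t: "0 \<le> t" "t \<le> 1"
  shows "bounded_prob_density (\<lambda>x. (1 - t) * F x + t * G x)"
proof -
  note F = bounded_prob_densityD[OF F] and G = bounded_prob_densityD[OF G]
  have [measurable]: "F \<in> borel_measurable borel" "G \<in> borel_measurable borel" by (fact F(1) G(1))+
  have linear: "(\<integral>\<^sup>+x. ((1 - t) * F x + t * G x) * h x \<partial>lborel)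
      = ennreal (1 - t) * (\<integral>\<^sup>+x. F x * h x \<partial>lborel) + ennreal t * (\<integral>\<^sup>+x. G x * h x \<partial>lborel)"
    if [measurable]: "h \<in> borel_measurable borel" and h: "\<And>x. 0 \<le> h x" for h
  proof -
    have "(\<integral>\<^sup>+x. ((1 - t) * F x + t * G x) * h x \<partial>lborel)
        = (\<integral>\<^sup>+x. ennreal (1 - t) * ennreal (F x * h x) + ennreal t * ennreal (G x * h x) \<partial>lborel)"
    proof (intro nn_integral_cong)
      fix x
      have "((1 - t) * F x + t * G x) * h x = (1 - t) * (F x * h x) + t * (G x * h x)"
        by (simp add: algebra_simps)
      then show "ennreal (((1 - t) * F x + t * G x) * h x)
          = ennreal (1 - t) * ennreal (F x * h x) + ennreal t * ennreal (G x * h x)"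
        using F(2)[of x] G(2)[of x] h[of x] t
        by (simp add: ennreal_plus[symmetric] ennreal_mult[symmetric] del: ennreal_plus)
    qed
    then show ?thesis by (simp add: nn_integral_add nn_integral_cmult)
  qed
  have "(1 - t) * F x + t * G x \<le> (1 - t) * 1 + t * 1" for x
    using F(3)[of x] G(3)[of x] t by (intro add_mono mult_left_mono) auto
  moreover have "(\<integral>\<^sup>+x. (1 - t) * F x + t * G x \<partial>lborel) = 1"
    using linear[of "\<lambda>_. 1"] F(4) G(4) t by (simp add: ennreal_plus[symmetric] del: ennreal_plus)
  moreover have "(\<integral>\<^sup>+x. ((1 - t) * F x + t * G x) * (norm x)\<^sup>2 \<partial>lborel) < \<infinity>"
    using linear[of "\<lambda>x. (norm x)\<^sup>2"] F(5) G(5) by (simp add: ennreal_mult_less_top)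
  ultimately show ?thesis
    using F(2) G(2) t unfolding bounded_prob_density_def by auto
qed

lemma P2_dens_le_one_iff:
  "\<mu> \<in> P2 \<and> dens_le_one \<mu> \<longleftrightarrow> (\<exists>p. bounded_prob_density p \<and> \<mu> = density lborel p)"
proof
  assume "\<mu> \<in> P2 \<and> dens_le_one \<mu>"
  then obtain f where [measurable]: "f \<in> borel_measurable borel" and f: "\<And>x. f x \<le> 1"
    and \<mu>: "\<mu> = density lborel f" and "\<mu> \<in> P2"
    unfolding dens_le_one_def by auto
  define p where "p x = enn2real (f x)" for x
  have "f = (\<lambda>x. ennreal (p x))"
  proof
    fix x show "f x = ennreal (p x)"
      using f[of x] unfolding p_def by (cases "f x") (auto simp: top_unique)
  qed
  then have \<mu>p: "\<mu> = density lborel p" unfolding \<mu> by simp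
  note P2 = P2_D[OF \<open>\<mu> \<in> P2\<close>]
  have "(\<integral>\<^sup>+x. p x \<partial>lborel) = emeasure \<mu> (space \<mu>)"
    unfolding P2(3) \<mu>p by (simp add: emeasure_density p_def)
  also have "\<dots> = 1" using P2(1) by (rule prob_space.emeasure_space_1)
  finally have "(\<integral>\<^sup>+x. p x \<partial>lborel) = 1" .
  moreover have "(\<integral>\<^sup>+x. p x * (norm x)\<^sup>2 \<partial>lborel) < \<infinity>"
    using P2(4) unfolding \<mu>p by (simp add: nn_integral_density ennreal_mult p_def)
  moreover have "0 \<le> p x \<and> p x \<le> 1" for x
    using f[of x] unfolding p_def by (cases "f x") (auto simp: enn2real_leI top_unique)
  ultimately have "bounded_prob_density p"
    unfolding bounded_prob_density_def p_def by auto
  then show "\<exists>p. bounded_prob_density p \<and> \<mu> = density lborel p" using \<mu>p by blast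
next
  assume "\<exists>p. bounded_prob_density p \<and> \<mu> = density lborel p"
  then obtain p where p: "bounded_prob_density p" and \<mu>: "\<mu> = density lborel p" by blast
  note p = bounded_prob_densityD[OF p]
  have [measurable]: "p \<in> borel_measurable borel" by (fact p(1))
  have "prob_space \<mu>"
    unfolding \<mu> by (rule prob_spaceI) (simp add: emeasure_density p(4))
  moreover have "(\<integral>\<^sup>+ x. ennreal ((norm x)\<^sup>2) \<partial>\<mu>) < \<infinity>"
    using p(5) unfolding \<mu> by (simp add: nn_integral_density ennreal_mult p(2))
  moreover have "dens_le_one \<mu>"
    unfolding dens_le_one_def \<mu> using p(2,3) by (intro bexI[of _ "\<lambda>x. ennreal (p x)"]) auto
  ultimately show "\<mu> \<in> P2 \<and> dens_le_one \<mu>"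
    unfolding P2_def \<mu> by simp
qed

section \<open>Convexity of the squared Wasserstein distance under mixing\<close>

definition mix_measure :: "real \<Rightarrow> 'a measure \<Rightarrow> 'a measure \<Rightarrow> 'a measure" where
  "mix_measure t M N =
     measure_of (space M) (sets M) (\<lambda>A. ennreal (1 - t) * emeasure M A + ennreal t * emeasure N A)"

lemma sets_mix_measure [simp, measurable_cong]: "sets (mix_measure t M N) = sets M"
  unfolding mix_measure_def by (rule sets.sets_measure_of_eq)

lemma space_mix_measure [simp]: "space (mix_measure t M N) = space M"
  unfolding mix_measure_def by (simp add: space_measure_of_conv)

lemma emeasure_mix_measure:
  assumes "sets N = sets M" "A \<in> sets M"
  shows "emeasure (mix_measure t M N) A = ennreal (1 - t) * emeasure M A + ennreal t * emeasure N A"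
  unfolding mix_measure_def
proof (rule emeasure_measure_of_sigma)
  show "countably_additive (sets M) (\<lambda>A. ennreal (1 - t) * emeasure M A + ennreal t * emeasure N A)"
  proof (rule countably_additiveI)
    fix F :: "nat \<Rightarrow> _" assume "range F \<subseteq> sets M" "disjoint_family F"
    then show "(\<Sum>i. ennreal (1 - t) * emeasure M (F i) + ennreal t * emeasure N (F i)) =
        ennreal (1 - t) * emeasure M (\<Union>i. F i) + ennreal t * emeasure N (\<Union>i. F i)"
      using assms(1) by (simp add: suminf_add[symmetric] ennreal_suminf_cmult suminf_emeasure)
  qed
qed (use assms in \<open>auto simp: positive_def intro: sets.sigma_algebra_axioms\<close>)

lemma nn_integral_mix_measure:
  assumes N: "sets N = sets M" and f: "f \<in> borel_measurable M"
  shows "(\<integral>\<^sup>+x. f x \<partial>mix_measure t M N) = ennreal (1 - t) * (\<integral>\<^sup>+x. f x \<partial>M) + ennreal t * (\<integral>\<^sup>+x. f x \<partial>N)"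
  using f
proof (induct rule: borel_measurable_induct)
  case (cong f g)
  have "(\<integral>\<^sup>+x. f x \<partial>K) = (\<integral>\<^sup>+x. g x \<partial>K)" if "space K = space M" for K
    using cong that by (intro nn_integral_cong) simp
  moreover have "space N = space M" using N by (rule sets_eq_imp_space_eq)
  ultimately show ?case using cong by simp
next
  case (set A)
  then show ?case using N by (simp add: emeasure_mix_measure)
next
  case (mult u c)
  then have "u \<in> borel_measurable N" using N by (simp cong: measurable_cong_sets)
  with mult show ?case
    by (simp add: nn_integral_cmult distrib_left mult.left_commute measurable_cong_sets[OF refl N])
next
  case (add u v)
  then have "u \<in> borel_measurable N" "v \<in> borel_measurable N" using N by (simp_all cong: measurable_cong_sets)
  with add show ?case
    by (simp add: nn_integral_add distrib_left algebra_simps measurable_cong_sets[OF refl N])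
next
  case (seq U)
  have meas: "U i \<in> borel_measurable K" if "sets K = sets M" for K i
    using seq that by (simp cong: measurable_cong_sets)
  have sup: "(\<integral>\<^sup>+x. (\<Squnion> range U) x \<partial>K) = (\<Squnion>i. \<integral>\<^sup>+x. U i x \<partial>K)" if "sets K = sets M" for K
    using seq meas[OF that] by (simp add: nn_integral_monotone_convergence_SUP[symmetric] SUP_apply image_comp)
  have inc: "incseq (\<lambda>i. \<integral>\<^sup>+x. U i x \<partial>K)" for K
    using seq by (intro monoI nn_integral_mono) (auto simp: incseq_def le_fun_def)
  have "(\<Squnion>i. \<integral>\<^sup>+x. U i x \<partial>mix_measure t M N)
      = (\<Squnion>i. ennreal (1 - t) * (\<integral>\<^sup>+x. U i x \<partial>M) + ennreal t * (\<integral>\<^sup>+x. U i x \<partial>N))"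
    using seq by simp
  also have "\<dots> = ennreal (1 - t) * (\<Squnion>i. \<integral>\<^sup>+x. U i x \<partial>M) + ennreal t * (\<Squnion>i. \<integral>\<^sup>+x. U i x \<partial>N)"
    by (subst ennreal_SUP_add)
      (auto intro!: mult_left_mono simp: incseq_def inc[THEN incseqD] SUP_mult_left_ennreal)
  finally show ?case using sup N by simp
qed

lemma distr_mix_measure:
  assumes "sets N = sets M" "f \<in> measurable M K"
  shows "distr (mix_measure t M N) K f = mix_measure t (distr M K f) (distr N K f)"
proof (rule measure_eqI)
  fix A assume "A \<in> sets (distr (mix_measure t M N) K f)"
  then have A: "A \<in> sets K" by simp
  have "f \<in> measurable N K" using assms by (simp cong: measurable_cong_sets)
  moreover have "space N = space M" using assms(1) by (rule sets_eq_imp_space_eq)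
  ultimately show "emeasure (distr (mix_measure t M N) K f) A = emeasure (mix_measure t (distr M K f) (distr N K f)) A"
    using assms A by (simp add: emeasure_distr emeasure_mix_measure measurable_sets)
qed simp

lemma mix_measure_same:
  assumes "0 \<le> t" "t \<le> 1"
  shows "mix_measure t M M = M"
proof (rule measure_eqI)
  fix A assume "A \<in> sets (mix_measure t M M)"
  moreover have "ennreal (1 - t) + ennreal t = 1"
    using assms by (simp add: ennreal_plus[symmetric] del: ennreal_plus)
  ultimately show "emeasure (mix_measure t M M) A = emeasure M A"
    by (simp add: emeasure_mix_measure distrib_right[symmetric])
qed simp

lemma density_convex_combination:
  fixes F G :: "'a::euclidean_space \<Rightarrow> real"
  assumes [measurable]: "F \<in> borel_measurable borel" "G \<in> borel_measurable borel"
    and "\<And>x. 0 \<le> F x" "\<And>x. 0 \<le> G x" "0 \<le> t" "t \<le> 1"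
  shows "density lborel (\<lambda>x. (1 - t) * F x + t * G x) = mix_measure t (density lborel F) (density lborel G)"
proof (rule measure_eqI)
  fix A assume "A \<in> sets (density lborel (\<lambda>x. (1 - t) * F x + t * G x))"
  then have [measurable]: "A \<in> sets borel" by simp
  have "(\<integral>\<^sup>+x\<in>A. ennreal ((1 - t) * F x + t * G x) \<partial>lborel)
      = (\<integral>\<^sup>+x. ennreal (1 - t) * (ennreal (F x) * indicator A x) + ennreal t * (ennreal (G x) * indicator A x) \<partial>lborel)"
  proof (intro nn_integral_cong)
    fix x
    have "ennreal ((1 - t) * F x + t * G x) = ennreal (1 - t) * ennreal (F x) + ennreal t * ennreal (G x)"
      using assms(3,4)[of x] assms(5,6) by (simp add: ennreal_plus ennreal_mult)
    then show "ennreal ((1 - t) * F x + t * G x) * indicator A x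
        = ennreal (1 - t) * (ennreal (F x) * indicator A x) + ennreal t * (ennreal (G x) * indicator A x)"
      by (simp add: distrib_right mult.assoc)
  qed
  then show "emeasure (density lborel (\<lambda>x. (1 - t) * F x + t * G x)) A
      = emeasure (mix_measure t (density lborel F) (density lborel G)) A"
    by (simp add: emeasure_density emeasure_mix_measure nn_integral_add nn_integral_cmult)
qed simp

definition transport_cost :: "'a::euclidean_space measure \<Rightarrow> 'a measure \<Rightarrow> ennreal" where
  "transport_cost \<mu> \<nu> = (INF \<gamma>\<in>couplings \<mu> \<nu>. \<integral>\<^sup>+p. ennreal ((dist (fst p) (snd p))\<^sup>2) \<partial>\<gamma>)"

lemma W2_squared: "(W2 \<mu> \<nu>)\<^sup>2 = enn2real (transport_cost \<mu> \<nu>)"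
  unfolding W2_def transport_cost_def by simp

lemma pair_measure_in_couplings:
  assumes "prob_space \<mu>" "prob_space \<nu>" "sets \<mu> = sets borel" "sets \<nu> = sets borel"
  shows "\<mu> \<Otimes>\<^sub>M \<nu> \<in> couplings \<mu> \<nu>"
proof -
  interpret \<mu>: prob_space \<mu> by fact
  interpret \<nu>: prob_space \<nu> by fact
  interpret pair_sigma_finite \<mu> \<nu> ..
  have "distr (\<mu> \<Otimes>\<^sub>M \<nu>) borel fst = distr (\<mu> \<Otimes>\<^sub>M \<nu>) \<mu> fst"
    using assms(3) by (intro distr_cong) auto
  also have "\<dots> = \<mu>" by (rule \<nu>.distr_pair_fst)
  finally have fst: "distr (\<mu> \<Otimes>\<^sub>M \<nu>) borel fst = \<mu>" .
  have "distr (\<mu> \<Otimes>\<^sub>M \<nu>) borel snd = distr (distr (\<nu> \<Otimes>\<^sub>M \<mu>) (\<mu> \<Otimes>\<^sub>M \<nu>) (\<lambda>(x, y). (y, x))) \<nu> snd"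
    using assms(4) by (intro distr_cong) (auto simp: distr_pair_swap[symmetric])
  also have "\<dots> = distr (\<nu> \<Otimes>\<^sub>M \<mu>) \<nu> fst"
    by (subst distr_distr) (auto intro!: distr_cong simp: comp_def case_prod_beta)
  also have "\<dots> = \<nu>" by (rule \<mu>.distr_pair_fst)
  finally show ?thesis
    using fst assms(3,4) unfolding couplings_def by (auto intro: sets_pair_measure_cong)
qed

lemma transport_cost_finite:
  assumes "\<mu> \<in> P2" "\<nu> \<in> P2"
  shows "transport_cost \<mu> \<nu> < \<infinity>"
proof -
  note \<mu> = P2_D[OF assms(1)] and \<nu> = P2_D[OF assms(2)]
  interpret \<mu>: prob_space \<mu> by fact
  interpret \<nu>: prob_space \<nu> by fact
  interpret pair_sigma_finite \<mu> \<nu> ..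
  have norm_measurable [measurable]:
    "(\<lambda>x. ennreal ((norm x)\<^sup>2)) \<in> borel_measurable \<mu>" "(\<lambda>x. ennreal ((norm x)\<^sup>2)) \<in> borel_measurable \<nu>"
    using \<mu>(2) \<nu>(2) by (simp_all cong: measurable_cong_sets)
  have "(\<lambda>p. ennreal ((dist (fst p) (snd p))\<^sup>2)) \<in> borel_measurable (\<mu> \<Otimes>\<^sub>M \<nu>)"
    by (subst measurable_cong_sets[OF sets_pair_measure_cong[OF \<mu>(2) \<nu>(2)] refl]) measurable
  then have "transport_cost \<mu> \<nu> \<le> (\<integral>\<^sup>+x. \<integral>\<^sup>+y. (dist x y)\<^sup>2 \<partial>\<nu> \<partial>\<mu>)"
    unfolding transport_cost_def
    using pair_measure_in_couplings[OF \<mu>(1) \<nu>(1) \<mu>(2) \<nu>(2)]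
    by (auto intro!: INF_lower2 simp: \<nu>.nn_integral_fst[symmetric])
  also have "\<dots> \<le> (\<integral>\<^sup>+x. \<integral>\<^sup>+y. 2 * ennreal ((norm x)\<^sup>2) + 2 * ennreal ((norm y)\<^sup>2) \<partial>\<nu> \<partial>\<mu>)"
  proof (intro nn_integral_mono)
    fix x y :: 'a
    have "(dist x y)\<^sup>2 \<le> (norm x + norm y)\<^sup>2"
      using norm_triangle_ineq4[of x y] by (simp add: dist_norm power_mono)
    also have "\<dots> \<le> 2 * (norm x)\<^sup>2 + 2 * (norm y)\<^sup>2"
      using zero_le_power2[of "norm x - norm y"] by (simp add: power2_sum power2_diff)
    finally have "ennreal ((dist x y)\<^sup>2) \<le> ennreal (2 * (norm x)\<^sup>2 + 2 * (norm y)\<^sup>2)"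
      by (rule ennreal_leI)
    then show "ennreal ((dist x y)\<^sup>2) \<le> 2 * ennreal ((norm x)\<^sup>2) + 2 * ennreal ((norm y)\<^sup>2)"
      by (simp add: ennreal_plus ennreal_mult)
  qed
  also have "\<dots> = 2 * (\<integral>\<^sup>+x. (norm x)\<^sup>2 \<partial>\<mu>) + 2 * (\<integral>\<^sup>+y. (norm y)\<^sup>2 \<partial>\<nu>)"
    by (simp add: nn_integral_add nn_integral_cmult norm_measurable \<mu>.emeasure_space_1 \<nu>.emeasure_space_1)
  also have "\<dots> < \<infinity>"
    using \<mu>(4) \<nu>(4) by (simp add: ennreal_mult_less_top)
  finally show ?thesis .
qed

lemma mix_measure_in_couplings:
  assumes \<gamma>: "\<gamma> \<in> couplings \<mu> a" and \<gamma>': "\<gamma>' \<in> couplings \<mu> b" and t: "0 \<le> t" "t \<le> 1"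
  shows "mix_measure t \<gamma> \<gamma>' \<in> couplings \<mu> (mix_measure t a b)"
proof -
  have sets: "sets \<gamma> = sets (borel \<Otimes>\<^sub>M borel)" "sets \<gamma>' = sets \<gamma>"
    using \<gamma> \<gamma>' unfolding couplings_def by auto
  have "fst \<in> measurable \<gamma> borel" "snd \<in> measurable \<gamma> borel"
    using sets(1) by (simp_all cong: measurable_cong_sets)
  then show ?thesis
    using \<gamma> \<gamma>' sets t unfolding couplings_def by (simp add: distr_mix_measure mix_measure_same)
qed

lemma W2_squared_mix_measure_le:
  assumes "\<mu> \<in> P2" "a \<in> P2" "b \<in> P2" and t: "0 \<le> t" "t \<le> 1"
  shows "(W2 \<mu> (mix_measure t a b))\<^sup>2 \<le> (1 - t) * (W2 \<mu> a)\<^sup>2 + t * (W2 \<mu> b)\<^sup>2"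
proof -
  define cost where "cost \<gamma> = (\<integral>\<^sup>+p. ennreal ((dist (fst p) (snd p))\<^sup>2) \<partial>\<gamma>)" for \<gamma> :: "('a \<times> 'a) measure"
  obtain ca where ca: "0 \<le> ca" "transport_cost \<mu> a = ennreal ca"
    using transport_cost_finite[OF assms(1,2)] by (auto simp: less_top_ennreal)
  obtain cb where cb: "0 \<le> cb" "transport_cost \<mu> b = ennreal cb"
    using transport_cost_finite[OF assms(1,3)] by (auto simp: less_top_ennreal)
  have "transport_cost \<mu> (mix_measure t a b) \<le> ennreal ((1 - t) * ca + t * cb)"
  proof (rule ennreal_le_epsilon)
    fix e :: real assume "0 < e"
    obtain \<gamma> where \<gamma>: "\<gamma> \<in> couplings \<mu> a" "cost \<gamma> < ennreal ca + ennreal e"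
      using INF_approx_ennreal[OF \<open>0 < e\<close>, of "transport_cost \<mu> a" cost "couplings \<mu> a"] ca
      unfolding transport_cost_def cost_def by auto
    obtain \<gamma>' where \<gamma>': "\<gamma>' \<in> couplings \<mu> b" "cost \<gamma>' < ennreal cb + ennreal e"
      using INF_approx_ennreal[OF \<open>0 < e\<close>, of "transport_cost \<mu> b" cost "couplings \<mu> b"] cb
      unfolding transport_cost_def cost_def by auto
    have "(\<lambda>p. ennreal ((dist (fst p) (snd p))\<^sup>2)) \<in> borel_measurable \<gamma>"
      using \<gamma>(1) unfolding couplings_def by (simp cong: measurable_cong_sets)
    then have "cost (mix_measure t \<gamma> \<gamma>') = ennreal (1 - t) * cost \<gamma> + ennreal t * cost \<gamma>'"
      using \<gamma>(1) \<gamma>'(1) unfolding cost_def couplings_def by (intro nn_integral_mix_measure) auto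
    moreover have "transport_cost \<mu> (mix_measure t a b) \<le> cost (mix_measure t \<gamma> \<gamma>')"
      unfolding transport_cost_def cost_def
      by (rule INF_lower) (rule mix_measure_in_couplings[OF \<gamma>(1) \<gamma>'(1) t])
    moreover have "ennreal (1 - t) * cost \<gamma> + ennreal t * cost \<gamma>'
        \<le> ennreal (1 - t) * (ennreal ca + ennreal e) + ennreal t * (ennreal cb + ennreal e)"
      using \<gamma>(2) \<gamma>'(2) by (intro add_mono mult_left_mono) auto
    moreover have "\<dots> = ennreal ((1 - t) * ca + t * cb) + ennreal e"
    proof -
      have "(1 - t) * (ca + e) + t * (cb + e) = ((1 - t) * ca + t * cb) + e" by (simp add: algebra_simps)
      then show ?thesis using t ca cb \<open>0 < e\<close>
        by (simp add: ennreal_plus[symmetric] ennreal_mult[symmetric] del: ennreal_plus)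
    qed
    ultimately show "transport_cost \<mu> (mix_measure t a b) \<le> ennreal ((1 - t) * ca + t * cb) + ennreal e"
      by order
  qed
  then have "enn2real (transport_cost \<mu> (mix_measure t a b)) \<le> (1 - t) * ca + t * cb"
    using t ca cb by (intro enn2real_leI) auto
  then show ?thesis unfolding W2_squared using ca cb by simp
qed

section \<open>First variation at a minimizer\<close>

lemma E_inf_density:
  assumes "bounded_prob_density p"
  shows "E_inf (density lborel p) = ereal (newton_interaction p p / 2)"
  using assms P2_dens_le_one_iff[of "density lborel p"]
  by (auto simp: E_inf_def integral_newton_pot_density)

lemma E_inf_tilde_density:
  assumes "bounded_prob_density p" "bounded_prob_density q"
  shows "E_inf_tilde (density lborel q) (density lborel p) = ereal (newton_interaction q p)"
  using assms P2_dens_le_one_iff[of "density lborel q"]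
  by (auto simp: E_inf_tilde_def integral_newton_pot_density)

lemma nonneg_if_nonneg_near_zero:
  fixes D E :: real
  assumes "\<And>t. 0 < t \<Longrightarrow> t \<le> 1 \<Longrightarrow> 0 \<le> t * D + t\<^sup>2 * E"
  shows "0 \<le> D"
proof (rule tendsto_lowerbound)
  show "((\<lambda>t. D + t * E) \<longlongrightarrow> D) (at_right 0)"
    by (auto intro!: tendsto_eq_intros)
  have "0 \<le> D + t * E" if "0 < t" "t < 1" for t
  proof -
    have "0 \<le> t * (D + t * E)"
      using assms[of t] that by (simp add: power2_eq_square algebra_simps)
    then show ?thesis using \<open>0 < t\<close> by (simp add: zero_le_mult_iff)
  qed
  then show "\<forall>\<^sub>F t in at_right 0. 0 \<le> D + t * E"
    using eventually_at_right_real[of 0 "1::real"] by (auto elim: eventually_mono)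
qed simp

lemma minimizer_le_convex_combination:
  assumes "\<tau> > 0" "\<rho> \<in> P2"
    and min: "\<rho>\<^sub>\<tau> \<in> argmin_P2 (\<lambda>\<nu>. ereal ((W2 \<rho> \<nu>)\<^sup>2 / (2 * \<tau>)) + E_inf \<nu>)"
    and F: "bounded_prob_density F" "\<rho>\<^sub>\<tau> = density lborel F"
    and G: "bounded_prob_density G" "\<nu> = density lborel G"
    and t: "0 \<le> t" "t \<le> 1"
  shows "(W2 \<rho> \<rho>\<^sub>\<tau>)\<^sup>2 / (2 * \<tau>) + newton_interaction F F / 2
    \<le> ((1 - t) * (W2 \<rho> \<rho>\<^sub>\<tau>)\<^sup>2 + t * (W2 \<rho> \<nu>)\<^sup>2) / (2 * \<tau>)
      + ((1 - t)\<^sup>2 * newton_interaction F F + 2 * t * (1 - t) * newton_interaction G F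
         + t\<^sup>2 * newton_interaction G G) / 2"
proof -
  define P where "P x = (1 - t) * F x + t * G x" for x
  have P: "bounded_prob_density P"
    unfolding P_def using F(1) G(1) t by (rule bounded_prob_density_convex_combination)
  have mix: "density lborel P = mix_measure t \<rho>\<^sub>\<tau> \<nu>"
    unfolding P_def F(2) G(2) using F(1) G(1) t
    by (intro density_convex_combination) (auto intro: bounded_prob_densityD)
  have "\<rho>\<^sub>\<tau> \<in> P2" "\<nu> \<in> P2" "density lborel P \<in> P2"
    using F G P P2_dens_le_one_iff by blast+
  then have "(W2 \<rho> (density lborel P))\<^sup>2 / (2 * \<tau>) \<le> ((1 - t) * (W2 \<rho> \<rho>\<^sub>\<tau>)\<^sup>2 + t * (W2 \<rho> \<nu>)\<^sup>2) / (2 * \<tau>)"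
    unfolding mix using W2_squared_mix_measure_le[OF \<open>\<rho> \<in> P2\<close> _ _ t] \<open>\<tau> > 0\<close>
    by (intro divide_right_mono) auto
  moreover have "ereal ((W2 \<rho> \<rho>\<^sub>\<tau>)\<^sup>2 / (2 * \<tau>)) + E_inf \<rho>\<^sub>\<tau>
      \<le> ereal ((W2 \<rho> (density lborel P))\<^sup>2 / (2 * \<tau>)) + E_inf (density lborel P)"
    using min \<open>density lborel P \<in> P2\<close> unfolding argmin_P2_def by blast
  ultimately show ?thesis
    using newton_interaction_convex_combination[OF F(1) G(1), of t]
    by (simp add: E_inf_density F P flip: P_def)
qed

lemma minimizer_first_variation:
  assumes "\<tau> > 0" "\<rho> \<in> P2"
    and min: "\<rho>\<^sub>\<tau> \<in> argmin_P2 (\<lambda>\<nu>. ereal ((W2 \<rho> \<nu>)\<^sup>2 / (2 * \<tau>)) + E_inf \<nu>)"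
    and F: "bounded_prob_density F" "\<rho>\<^sub>\<tau> = density lborel F"
    and G: "bounded_prob_density G" "\<nu> = density lborel G"
  shows "(W2 \<rho> \<rho>\<^sub>\<tau>)\<^sup>2 / (2 * \<tau>) + newton_interaction F F \<le> (W2 \<rho> \<nu>)\<^sup>2 / (2 * \<tau>) + newton_interaction G F"
proof -
  define w0 w1 a b c where defs: "w0 = (W2 \<rho> \<rho>\<^sub>\<tau>)\<^sup>2" "w1 = (W2 \<rho> \<nu>)\<^sup>2"
    "a = newton_interaction F F" "b = newton_interaction G F" "c = newton_interaction G G"
  let ?D = "(w1 - w0) / (2 * \<tau>) + b - a" and ?E = "(a - 2 * b + c) / 2"
  have "0 \<le> t * ?D + t\<^sup>2 * ?E" if "0 < t" "t \<le> 1" for t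
  proof -
    have "((1 - t) * w0 + t * w1) / (2 * \<tau>) + ((1 - t)\<^sup>2 * a + 2 * t * (1 - t) * b + t\<^sup>2 * c) / 2
        - (w0 / (2 * \<tau>) + a / 2) = t * ?D + t\<^sup>2 * ?E"
      using \<open>\<tau> > 0\<close> by (simp add: field_simps power2_eq_square)
    then show ?thesis
      using minimizer_le_convex_combination[OF assms, of t] that unfolding defs by linarith
  qed
  then have "0 \<le> ?D" by (rule nonneg_if_nonneg_near_zero)
  then show ?thesis unfolding defs by (simp add: diff_divide_distrib)
qed

theorem lemma2p18:
  fixes \<tau> :: real and \<rho> \<rho>\<^sub>\<tau> :: "'a::euclidean_space measure"
  assumes "\<tau> > 0" and "\<rho> \<in> P2"
    and "\<rho>\<^sub>\<tau> \<in> argmin_P2 (\<lambda>\<nu>. ereal ((W2 \<rho> \<nu>)\<^sup>2 / (2 * \<tau>)) + E_inf \<nu>)"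
  shows "\<rho>\<^sub>\<tau> \<in> argmin_P2 (\<lambda>\<nu>. ereal ((W2 \<rho> \<nu>)\<^sup>2 / (2 * \<tau>)) + E_inf_tilde \<nu> \<rho>\<^sub>\<tau>)"
proof -
  have "\<rho>\<^sub>\<tau> \<in> P2" and min: "\<And>\<nu>. \<nu> \<in> P2 \<Longrightarrow>
      ereal ((W2 \<rho> \<rho>\<^sub>\<tau>)\<^sup>2 / (2 * \<tau>)) + E_inf \<rho>\<^sub>\<tau> \<le> ereal ((W2 \<rho> \<nu>)\<^sup>2 / (2 * \<tau>)) + E_inf \<nu>"
    using assms(3) unfolding argmin_P2_def by auto
  have "ereal ((W2 \<rho> \<rho>\<^sub>\<tau>)\<^sup>2 / (2 * \<tau>)) + E_inf_tilde \<rho>\<^sub>\<tau> \<rho>\<^sub>\<tau>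
      \<le> ereal ((W2 \<rho> \<nu>)\<^sup>2 / (2 * \<tau>)) + E_inf_tilde \<nu> \<rho>\<^sub>\<tau>" if "\<nu> \<in> P2" for \<nu>
  proof (cases "dens_le_one \<nu>")
    case True
    then have "dens_le_one \<rho>\<^sub>\<tau>"
      using min[OF \<open>\<nu> \<in> P2\<close>] by (auto simp: E_inf_def split: if_splits)
    then obtain F G where F: "bounded_prob_density F" "\<rho>\<^sub>\<tau> = density lborel F"
      and G: "bounded_prob_density G" "\<nu> = density lborel G"
      using True \<open>\<rho>\<^sub>\<tau> \<in> P2\<close> \<open>\<nu> \<in> P2\<close> P2_dens_le_one_iff by metis
    then show ?thesis
      using minimizer_first_variation[OF assms F G] by (simp add: F G E_inf_tilde_density)
  qed (simp add: E_inf_tilde_def)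
  then show ?thesis
    using \<open>\<rho>\<^sub>\<tau> \<in> P2\<close> unfolding argmin_P2_def by blast
qed

end
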